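(* Let $F:[0,\infty)\to[0,1]$ be a monotonically non-decreasing function, let $q_0\ge 0$, and let $(x_t)_{t\ge 0}$ be the real sequence defined by $x_0\ge 0$ and $x_{t+1}=F(x_t)\,x_t+q_0$ for $t\ge 0$. Suppose the set $\Gamma=\{t\ge 1 : x_t\le x_{t-1}\}$ is non-empty. Then: 1) If $q_0\neq 0$, then for every $t_0\in\Gamma$ and every $t\ge t_0$, $$x_t\le F(x_{t_0})^{t-t_0}\,x_{t_0}+q_0\,\frac{1-F(x_{t_0})^{t-t_0}}{1-F(x_{t_0})}.$$ 2) For every $t_0\in\Gamma$, $\sup_{t\ge t_0}x_t\le x_{t_0}$. 3) $\limsup_{t\to\infty}x_t\le \inf_{t_0\in\Gamma}x_{t_0}$.
   Context: $F(x)^{k}$ denotes the $k$-th power of the number $F(x)$. *)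

theory Defs
  imports "HOL-Analysis.Analysis"
begin

end

theory Submission
  imports Defs
begin

text \<open>The map \<open>g y = F y * y + q0\<close> is monotone on \<open>[0, \<infinity>)\<close>, so once its orbit takes one
  step down it keeps going down: after any \<open>t0 \<in> \<Gamma>\<close> the sequence is non-increasing, which
  gives 2) and 3). Along this tail \<open>F (x t) \<le> F (x t0)\<close>, so the orbit is dominated by the
  affine recursion \<open>y \<mapsto> F (x t0) * y + q0\<close>, whose closed form is the bound in 1). That
  closed form needs \<open>F (x t0) \<noteq> 1\<close>: with factor \<open>1\<close> at \<open>t0\<close>, monotonicity would force factor
  \<open>1\<close> at \<open>t0 - 1\<close> too, and the step into \<open>t0\<close> would increase \<open>x\<close> by \<open>q0 > 0\<close>.\<close>

lemma mono_on_mult_self_add: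
  fixes F :: "'a::linordered_semiring \<Rightarrow> 'a"
  assumes "mono_on {0..} F" and "\<And>y. 0 \<le> y \<Longrightarrow> 0 \<le> F y"
  shows "mono_on {0..} (\<lambda>y. F y * y + c)"
proof (rule mono_onI)
  fix y z :: 'a
  assume "y \<in> {0..}" "z \<in> {0..}" "y \<le> z"
  then have "F y \<le> F z" using assms(1) by (auto dest: mono_onD)
  then show "F y * y + c \<le> F z * z + c"
    using \<open>y \<in> {0..}\<close> \<open>z \<in> {0..}\<close> \<open>y \<le> z\<close> assms(2) by (simp add: mult_mono)
qed

lemma mono_on_orbit_descent_persists:
  assumes "mono_on S f" and "\<And>t. x t \<in> S" and "\<And>t. x (Suc t) = f (x t)"
    and "x (Suc s) \<le> x s"
  shows "decseq (\<lambda>k. x (s + k))"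
proof (rule decseq_SucI)
  show "x (s + Suc k) \<le> x (s + k)" for k
  proof (induction k)
    case 0
    then show ?case using assms(4) by simp
  next
    case (Suc k)
    then have "f (x (s + Suc k)) \<le> f (x (s + k))"
      using assms(1,2) by (auto dest: mono_onD)
    then show ?case using assms(3) by simp
  qed
qed

lemma affine_recurrence_bound:
  fixes y :: "nat \<Rightarrow> 'a::linordered_field"
  assumes step: "\<And>k. y (Suc k) \<le> a * y k + q" and "0 \<le> a" and "a \<noteq> 1"
  shows "y k \<le> a ^ k * y 0 + q * ((1 - a ^ k) / (1 - a))"
proof (induction k)
  case 0
  then show ?case by simp
next
  case (Suc k)
  have "y (Suc k) \<le> a * y k + q" by (rule step)
  also have "\<dots> \<le> a * (a ^ k * y 0 + q * ((1 - a ^ k) / (1 - a))) + q"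
    using Suc \<open>0 \<le> a\<close> by (simp add: mult_left_mono)
  also have "\<dots> = a ^ Suc k * y 0 + q * ((1 - a ^ Suc k) / (1 - a))"
    using \<open>a \<noteq> 1\<close> by (simp add: field_simps)
  finally show ?case .
qed

locale damped_recursion =
  fixes F :: "real \<Rightarrow> real" and x :: "nat \<Rightarrow> real" and q0 :: real
  assumes F_range: "\<And>y. y \<ge> 0 \<Longrightarrow> 0 \<le> F y \<and> F y \<le> 1"
    and F_mono: "mono_on {0..} F"
    and q0_nonneg: "q0 \<ge> 0"
    and x0_nonneg: "x 0 \<ge> 0"
    and x_rec: "\<And>t. x (Suc t) = F (x t) * x t + q0"
begin

definition descent_times :: "nat set"
  where "descent_times = {t. t \<ge> 1 \<and> x t \<le> x (t - 1)}"

lemma descent_timesE: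
  assumes "t0 \<in> descent_times"
  obtains s where "t0 = Suc s" and "x (Suc s) \<le> x s"
  using assms unfolding descent_times_def by (cases t0) auto

lemma x_nonneg: "x t \<ge> 0"
  by (induction t) (use x0_nonneg x_rec F_range q0_nonneg in auto)

lemma F_mono_le: "0 \<le> y \<Longrightarrow> y \<le> z \<Longrightarrow> F y \<le> F z"
  by (rule mono_onD[OF F_mono]) auto

lemma x_le_descent_time:
  assumes "t0 \<in> descent_times" and "t0 \<le> t"
  shows "x t \<le> x t0"
proof -
  obtain s where s: "t0 = Suc s" "x (Suc s) \<le> x s"
    using assms(1) by (rule descent_timesE)
  have "mono_on {0..} (\<lambda>y. F y * y + q0)"
    by (rule mono_on_mult_self_add[OF F_mono]) (simp add: F_range)
  then have "decseq (\<lambda>k. x (s + k))"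
    by (rule mono_on_orbit_descent_persists[OF _ _ x_rec s(2)]) (simp add: x_nonneg)
  then have "x (s + (t - s)) \<le> x (s + 1)"
    by (rule decseqD) (use assms(2) s(1) in simp)
  then show ?thesis using assms(2) s(1) by simp
qed

lemma F_descent_time_neq_1:
  assumes "q0 \<noteq> 0" and "t0 \<in> descent_times"
  shows "F (x t0) \<noteq> 1"
proof
  assume F1: "F (x t0) = 1"
  obtain s where s: "t0 = Suc s" "x (Suc s) \<le> x s"
    using assms(2) by (rule descent_timesE)
  have "1 \<le> F (x s)" using F1 s F_mono_le[OF x_nonneg s(2)] by simp
  then have "F (x s) = 1" using F_range[OF x_nonneg] by (meson order_antisym)
  then have "x (Suc s) = x s + q0" using x_rec by simp
  then show False using s(2) assms(1) q0_nonneg by simp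
qed

lemma x_le_affine_bound:
  assumes "q0 \<noteq> 0" and "t0 \<in> descent_times" and "t0 \<le> t"
  shows "x t \<le> F (x t0) ^ (t - t0) * x t0 + q0 * ((1 - F (x t0) ^ (t - t0)) / (1 - F (x t0)))"
proof -
  have "x (t0 + Suc k) \<le> F (x t0) * x (t0 + k) + q0" for k
  proof -
    have "F (x (t0 + k)) \<le> F (x t0)"
      using F_mono_le[OF x_nonneg x_le_descent_time[OF assms(2)]] by simp
    then show ?thesis using x_rec[of "t0 + k"] x_nonneg[of "t0 + k"] by (simp add: mult_right_mono)
  qed
  then have "x (t0 + k) \<le> F (x t0) ^ k * x t0 + q0 * ((1 - F (x t0) ^ k) / (1 - F (x t0)))" for k
    using affine_recurrence_bound[where y = "\<lambda>k. x (t0 + k)"] F_range[OF x_nonneg]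
      F_descent_time_neq_1[OF assms(1,2)] by simp
  from this[of "t - t0"] show ?thesis using assms(3) by simp
qed

lemma SUP_from_descent_time_le:
  assumes "t0 \<in> descent_times"
  shows "(SUP t\<in>{t0..}. x t) \<le> x t0"
  using x_le_descent_time[OF assms] by (intro cSUP_least) auto

lemma limsup_le_INF_descent_times:
  assumes "descent_times \<noteq> {}"
  shows "limsup (\<lambda>t. ereal (x t)) \<le> ereal (INF t0\<in>descent_times. x t0)"
proof -
  have "limsup (\<lambda>t. ereal (x t)) \<le> ereal (x t0)" if "t0 \<in> descent_times" for t0
    using x_le_descent_time[OF that]
    by (intro Limsup_bounded) (auto simp: eventually_sequentially)
  then have "limsup (\<lambda>t. ereal (x t)) \<le> (INF y\<in>x ` descent_times. ereal y)"
    by (auto intro!: INF_greatest)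
  moreover have "bdd_below (x ` descent_times)"
    using x_nonneg by (auto simp: bdd_below_def)
  ultimately show ?thesis
    using ereal_Inf'[of "x ` descent_times"] assms by (simp add: image_image)
qed

end

theorem lemma1:
  fixes F :: "real \<Rightarrow> real" and x :: "nat \<Rightarrow> real" and q0 :: real
  assumes F_range: "\<And>y. y \<ge> 0 \<Longrightarrow> 0 \<le> F y \<and> F y \<le> 1"
    and F_mono: "mono_on {0..} F"
    and q0_nonneg: "q0 \<ge> 0"
    and x0_nonneg: "x 0 \<ge> 0"
    and x_rec: "\<And>t. x (Suc t) = F (x t) * x t + q0"
    and Gamma_ne: "{t::nat. t \<ge> 1 \<and> x t \<le> x (t - 1)} \<noteq> {}"
  shows "(q0 \<noteq> 0 \<longrightarrow>
           (\<forall>t0 \<in> {t::nat. t \<ge> 1 \<and> x t \<le> x (t - 1)}. \<forall>t \<ge> t0.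
              x t \<le> F (x t0) ^ (t - t0) * x t0
                      + q0 * ((1 - F (x t0) ^ (t - t0)) / (1 - F (x t0)))))
       \<and> (\<forall>t0 \<in> {t::nat. t \<ge> 1 \<and> x t \<le> x (t - 1)}. (SUP t\<in>{t0..}. x t) \<le> x t0)
       \<and> limsup (\<lambda>t. ereal (x t)) \<le>
           ereal (INF t0\<in>{t::nat. t \<ge> 1 \<and> x t \<le> x (t - 1)}. x t0)"
proof -
  interpret damped_recursion F x q0
    using assms by unfold_locales auto
  show ?thesis
    using x_le_affine_bound SUP_from_descent_time_le limsup_le_INF_descent_times Gamma_ne
    unfolding descent_times_def by blast
qed

end
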